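(* (a) The integer pairs $(m,n)$ with $\mathrm{N}_{K/\mathbb{Q}}(m+n\gamma^2)=\pm1$ are exactly $(\pm1,0)$, $(0,\pm1)$, $\pm(-1,1)$, $\pm(2,-1)$, $\pm(-7,4)$. (b) The integer pairs $(m,n)$ with $\mathrm{N}_{K/\mathbb{Q}}(m+n\gamma^2)=\pm5$ are exactly $\pm(1,1)$, $\pm(-3,2)$. (c) The integer pairs $(m,n)$ with $\mathrm{N}_{K/\mathbb{Q}}(m+n\gamma^2)=\pm7$ are exactly $\pm(-1,2)$, $\pm(-5,3)$.
   Context: $\gamma$ is the real root of $x^3-x-1$, $K=\mathbb{Q}(\gamma)$, and $\mathrm{N}_{K/\mathbb{Q}}$ is the field norm; note $\mathrm{N}_{K/\mathbb{Q}}(m+n\gamma^2)=m^3+2m^2n+mn^2+n^3$. *)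

theory Defs
  imports Main
begin

text \<open>Norm from K = Q(gamma) (gamma the real root of x^3 - x - 1) to Q of the
  element m + n gamma^2, for integers m, n, written out as the explicit cubic form
  given in the paper's context: N(m + n gamma^2) = m^3 + 2 m^2 n + m n^2 + n^3.\<close>
definition normK :: "int \<Rightarrow> int \<Rightarrow> int" where
  "normK m n = m^3 + 2 * m^2 * n + m * n^2 + n^3"

end

(* Every element of \<int>[\<gamma>] of norm \<plusminus>1, \<plusminus>5 or \<plusminus>7 is \<plusminus>\<gamma>^k \<rho> with \<rho> one of
   1, -1 - \<gamma> + 2\<gamma>^2, -2 + \<gamma> + \<gamma>^2: a power of \<gamma> moves its real embedding e(x) into [1, \<gamma>),
   and since N(x) = e(x) |\<sigma>(x)|^2 for a complex embedding \<sigma>, the element is then confined to a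
   small box, which is searched by evaluation. So m + n\<gamma>^2 has such a norm exactly when the
   \<gamma>-coordinate of \<gamma>^k \<rho> vanishes. Since \<gamma>^58 \<equiv> 1 modulo 59, this restricts k modulo 58
   to a few classes, and in each class Skolem's 59-adic argument shows that the known zero
   is the only one. *)

theory Submission
  imports Defs Complex_Main "HOL-Computational_Algebra.Primes"
begin

datatype zgamma = ZG (c0: int) (c1: int) (c2: int)

instantiation zgamma :: comm_ring_1
begin

definition "zero_zgamma = ZG 0 0 0"
definition "one_zgamma = ZG 1 0 0"
definition "plus_zgamma x y = ZG (c0 x + c0 y) (c1 x + c1 y) (c2 x + c2 y)"
definition "minus_zgamma x y = ZG (c0 x - c0 y) (c1 x - c1 y) (c2 x - c2 y)"
definition "uminus_zgamma x = ZG (- c0 x) (- c1 x) (- c2 x)"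

text \<open>\<^term>\<open>ZG a b c\<close> stands for \<open>a + b\<gamma> + c\<gamma>\<^sup>2\<close>; products are reduced with
  \<open>\<gamma>\<^sup>3 = \<gamma> + 1\<close> and \<open>\<gamma>\<^sup>4 = \<gamma>\<^sup>2 + \<gamma>\<close>.\<close>
definition "times_zgamma x y = ZG (c0 x * c0 y + c1 x * c2 y + c2 x * c1 y)
   (c0 x * c1 y + c1 x * c0 y + c1 x * c2 y + c2 x * c1 y + c2 x * c2 y)
   (c0 x * c2 y + c1 x * c1 y + c2 x * c0 y + c2 x * c2 y)"

instance
  by standard (auto simp: zero_zgamma_def one_zgamma_def plus_zgamma_def minus_zgamma_def
      uminus_zgamma_def times_zgamma_def zgamma.expand algebra_simps)

end

lemma ZG_ops [simp]:
  "ZG a b c + ZG d e f = ZG (a + d) (b + e) (c + f)"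
  "ZG a b c - ZG d e f = ZG (a - d) (b - e) (c - f)"
  "- ZG a b c = ZG (- a) (- b) (- c)"
  "ZG a b c * ZG d e f =
     ZG (a*d + b*f + c*e) (a*e + b*d + b*f + c*e + c*f) (a*f + b*e + c*d + c*f)"
  by (simp_all add: plus_zgamma_def minus_zgamma_def uminus_zgamma_def times_zgamma_def)

lemma zero_zgamma_eq: "(0::zgamma) = ZG 0 0 0"
  and one_zgamma_eq: "(1::zgamma) = ZG 1 0 0"
  by (simp_all add: zero_zgamma_def one_zgamma_def)

lemma of_nat_zgamma: "(of_nat k :: zgamma) = ZG (int k) 0 0"
  by (induct k) (simp_all add: zero_zgamma_eq one_zgamma_eq)

lemma c1_add: "c1 (x + y) = c1 x + c1 y"
  by (cases x; cases y) simp

lemma c1_uminus: "c1 (- x) = - c1 x"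
  by (cases x) simp

lemma c1_of_nat_mult: "c1 (of_nat k * x) = int k * c1 x"
  by (cases x) (simp add: of_nat_zgamma)

definition gam :: zgamma where "gam = ZG 0 1 0"

definition gam_inv :: zgamma where "gam_inv = ZG (-1) 0 1"

lemma gam_mult_gam_inv: "gam * gam_inv = 1"
  by (simp add: gam_def gam_inv_def one_zgamma_eq)

text \<open>The field norm of \<open>a + b\<gamma> + c\<gamma>\<^sup>2\<close>, i.e. the determinant of multiplication by it.\<close>
definition znorm :: "zgamma \<Rightarrow> int" where
  "znorm x = c0 x^3 + 2*c0 x^2*c2 x - c0 x*c1 x^2 - 3*c0 x*c1 x*c2 x + c0 x*c2 x^2
     + c1 x^3 - c1 x*c2 x^2 + c2 x^3"

lemma znorm_ZG:
  "znorm (ZG a b c) = a^3 + 2*a^2*c - a*b^2 - 3*a*b*c + a*c^2 + b^3 - b*c^2 + c^3"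
  by (simp add: znorm_def)

lemma znorm_eq_normK: "znorm (ZG m 0 n) = normK m n"
  by (simp add: znorm_def normK_def)

lemma znorm_uminus: "znorm (- x) = - znorm x"
  by (cases x) (simp add: znorm_ZG power2_eq_square power3_eq_cube algebra_simps)

lemma znorm_gam_mult: "znorm (gam * x) = znorm x"
  by (cases x) (simp add: gam_def znorm_ZG power2_eq_square power3_eq_cube algebra_simps)

lemma znorm_gam_inv_mult: "znorm (gam_inv * x) = znorm x"
  by (cases x) (simp add: gam_inv_def znorm_ZG power2_eq_square power3_eq_cube algebra_simps)

definition gam_pow :: "int \<Rightarrow> zgamma" where
  "gam_pow k = gam ^ nat k * gam_inv ^ nat (- k)"

lemma gam_pow_of_nat: "gam_pow (int n) = gam ^ n"
  by (simp add: gam_pow_def)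

lemma gam_pow_diff: "gam_pow (int m - int n) = gam ^ m * gam_inv ^ n"
proof (cases "n \<le> m")
  case True
  then obtain d where m: "m = n + d" using le_Suc_ex by blast
  have "gam ^ m * gam_inv ^ n = gam ^ d * (gam * gam_inv) ^ n"
    by (simp add: m power_add power_mult_distrib algebra_simps)
  then show ?thesis by (simp add: m gam_pow_def gam_mult_gam_inv)
next
  case False
  then obtain d where n: "n = m + d" using le_Suc_ex nat_le_linear by blast
  have "gam ^ m * gam_inv ^ n = gam_inv ^ d * (gam * gam_inv) ^ m"
    by (simp add: n power_add power_mult_distrib algebra_simps)
  then show ?thesis by (simp add: n gam_pow_def gam_mult_gam_inv)
qed

lemma gam_pow_add: "gam_pow (k + l) = gam_pow k * gam_pow l"
proof -
  have "k + l = int (nat k + nat l) - int (nat (- k) + nat (- l))" by simp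
  then have "gam_pow (k + l) = gam ^ (nat k + nat l) * gam_inv ^ (nat (- k) + nat (- l))"
    by (simp only: gam_pow_diff)
  then show ?thesis by (simp add: gam_pow_def power_add algebra_simps)
qed

lemma znorm_gam_pow_mult: "znorm (gam_pow k * x) = znorm x"
proof -
  have "znorm (gam ^ m * gam_inv ^ n * x) = znorm x" for m n
    by (induct m; induct n) (simp_all add: mult.assoc znorm_gam_mult znorm_gam_inv_mult)
  then show ?thesis by (simp add: gam_pow_def)
qed

definition \<gamma> :: real where
  "\<gamma> = (SOME x. x^3 = x + 1 \<and> 1.3247 \<le> x \<and> x \<le> 1.3248)"

lemma gamma_spec: "\<gamma>^3 = \<gamma> + 1 \<and> 1.3247 \<le> \<gamma> \<and> \<gamma> \<le> 1.3248"
proof -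
  have "\<exists>x\<ge>1.3247. x \<le> 1.3248 \<and> (\<lambda>x::real. x^3 - x - 1) x = 0"
    by (rule IVT) (auto intro!: continuous_intros simp: power3_eq_cube)
  then have "\<exists>x::real. x^3 = x + 1 \<and> 1.3247 \<le> x \<and> x \<le> 1.3248" by force
  then show ?thesis unfolding \<gamma>_def by (rule someI_ex)
qed

lemma gamma_cube: "\<gamma>^3 = \<gamma> + 1"
  and gamma_lower: "13247/10000 \<le> \<gamma>"
  and gamma_upper: "\<gamma> \<le> 13248/10000"
  using gamma_spec by simp_all

lemma gamma_sq_lower: "175483/100000 \<le> \<gamma>^2"
proof -
  have "(13247/10000::real)^2 \<le> \<gamma>^2" using gamma_lower by (intro power_mono) auto
  then show ?thesis by (simp add: power2_eq_square)
qed

lemma gamma_sq_upper: "\<gamma>^2 \<le> 17551/10000"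
proof -
  have "\<gamma>^2 \<le> (13248/10000::real)^2" using gamma_lower gamma_upper by (intro power_mono) auto
  then show ?thesis by (simp add: power2_eq_square)
qed

definition emb :: "zgamma \<Rightarrow> real" where
  "emb x = c0 x + c1 x * \<gamma> + c2 x * \<gamma>^2"

lemma emb_ZG: "emb (ZG a b c) = a + b * \<gamma> + c * \<gamma>^2"
  by (simp add: emb_def)

lemma emb_mult: "emb (x * y) = emb x * emb y"
proof (cases x; cases y)
  fix a b c a' b' c' assume xy: "x = ZG a b c" "y = ZG a' b' c'"
  have "emb x * emb y = emb (x * y) + (b*c' + c*b' + c*c'*\<gamma>) * (\<gamma>^3 - \<gamma> - 1)"
    unfolding xy by (simp add: emb_ZG power2_eq_square power3_eq_cube algebra_simps)
  then show ?thesis using gamma_cube by simp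
qed

lemma emb_uminus: "emb (- x) = - emb x"
  by (cases x) (simp add: emb_ZG)

lemma emb_power: "emb (x ^ n) = emb x ^ n"
  by (induct n) (simp_all add: emb_ZG one_zgamma_eq emb_mult)

lemma emb_gam_pow: "emb (gam_pow k) = \<gamma> powr k"
proof -
  have pos: "\<gamma> > 0" using gamma_lower by simp
  have "\<gamma> * (\<gamma>^2 - 1) = 1"
    using gamma_cube by (simp add: algebra_simps power3_eq_cube power2_eq_square)
  then have "emb gam_inv = inverse \<gamma>"
    using pos by (simp add: emb_ZG gam_inv_def field_simps)
  then have "emb (gam_pow k) = \<gamma> ^ nat k * inverse \<gamma> ^ nat (- k)"
    by (simp add: gam_pow_def emb_mult emb_power emb_ZG gam_def)
  also have "\<dots> = \<gamma> powr k"
    using pos by (cases "k \<ge> 0")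
      (simp_all add: powr_realpow[symmetric] powr_minus[symmetric] power_inverse)
  finally show ?thesis .
qed

text \<open>For a complex embedding \<open>\<sigma>\<close> of \<open>\<int>[\<gamma>]\<close>,
  \<open>2\<gamma> \<sigma>(x) = conj_re x + i \<surd>(\<gamma>(3 - \<gamma>)) conj_im x\<close>.\<close>
definition conj_re :: "zgamma \<Rightarrow> real" where
  "conj_re x = 2 * c0 x * \<gamma> - c1 x * \<gamma>^2 + c2 x * \<gamma> - c2 x"

definition conj_im :: "zgamma \<Rightarrow> real" where
  "conj_im x = c1 x - c2 x * \<gamma>"

text \<open>This is \<open>N(x) = emb x \<cdot> |\<sigma>(x)|\<^sup>2\<close>.\<close>
lemma emb_mult_conj_norm:
  "emb x * (conj_re x ^ 2 + \<gamma> * (3 - \<gamma>) * conj_im x ^ 2) = 4 * \<gamma>^2 * znorm x"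
proof -
  obtain a b c where x: "x = ZG a b c" by (cases x)
  define A B C where "A = real_of_int a" and "B = real_of_int b" and "C = real_of_int c"
  have "emb x * (conj_re x ^ 2 + \<gamma> * (3 - \<gamma>) * conj_im x ^ 2) - 4 * \<gamma>^2 * znorm x =
     (3*C^3*\<gamma>^2 - C^3*\<gamma>^3 - B*C^2*\<gamma> - B*C^2*\<gamma>^2 + B^2*C*\<gamma>^3 + B^3*\<gamma>^2 - A*C^2
      + 3*A*C^2*\<gamma> - 4*A*B*C*\<gamma>^2 - 3*A*B^2*\<gamma> + 4*A^2*C*\<gamma>) * (\<gamma>^3 - \<gamma> - 1)"
    unfolding x A_def B_def C_def conj_re_def conj_im_def
    by (simp add: emb_ZG znorm_ZG power2_eq_square power3_eq_cube algebra_simps)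
  then show ?thesis using gamma_cube by simp
qed

lemma conj_sq_sum_nonneg: "0 \<le> conj_re x ^ 2 + \<gamma> * (3 - \<gamma>) * conj_im x ^ 2"
  using gamma_lower gamma_upper by (intro add_nonneg_nonneg) auto

lemma znorm_nonneg_if_emb_pos:
  assumes "emb x > 0" shows "znorm x \<ge> 0"
proof -
  have "0 \<le> 4 * \<gamma>^2 * znorm x"
    unfolding emb_mult_conj_norm[symmetric] using assms conj_sq_sum_nonneg by simp
  then show ?thesis using gamma_lower by (simp add: zero_le_mult_iff)
qed

lemma emb_nonzero_if_znorm_nonzero: "znorm x \<noteq> 0 \<Longrightarrow> emb x \<noteq> 0"
  using emb_mult_conj_norm[of x] gamma_lower by auto

lemma conj_bounds:
  assumes "1 \<le> emb x" and "znorm x \<le> 7"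
  shows "\<bar>conj_re x\<bar> \<le> 7011/1000" and "\<bar>conj_im x\<bar> \<le> 4706/1000"
proof -
  define Q where "Q = conj_re x ^ 2 + \<gamma> * (3 - \<gamma>) * conj_im x ^ 2"
  have Q_nonneg: "0 \<le> \<gamma> * (3 - \<gamma>) * conj_im x ^ 2"
    using gamma_lower gamma_upper by simp
  have "Q \<le> emb x * Q"
    using mult_right_mono[OF assms(1) conj_sq_sum_nonneg[of x]] unfolding Q_def by simp
  also have "\<dots> = 4 * \<gamma>^2 * znorm x"
    unfolding Q_def by (rule emb_mult_conj_norm)
  also have "\<dots> \<le> 4 * \<gamma>^2 * 7"
    using assms(2) by (intro mult_left_mono) auto
  finally have Q_le: "Q \<le> 28 * \<gamma>^2" by simp
  have "conj_re x ^ 2 \<le> (7011/1000)^2"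
    using Q_le Q_nonneg gamma_sq_upper unfolding Q_def by (simp add: power2_eq_square; linarith)
  then have "\<bar>conj_re x\<bar>^2 \<le> (7011/1000)^2" by simp
  then show "\<bar>conj_re x\<bar> \<le> 7011/1000" by (rule power2_le_imp_le) simp
  have "\<gamma> * (3 - \<gamma>) * conj_im x ^ 2 \<le> 28 * \<gamma>^2"
    using Q_le zero_le_power2[of "conj_re x"] unfolding Q_def by linarith
  then have "\<gamma> * ((3 - \<gamma>) * conj_im x ^ 2) \<le> \<gamma> * (28 * \<gamma>)"
    by (simp add: power2_eq_square ac_simps)
  then have "(3 - \<gamma>) * conj_im x ^ 2 \<le> 28 * \<gamma>"
    using gamma_lower by simp
  moreover have "(16752/10000) * conj_im x ^ 2 \<le> (3 - \<gamma>) * conj_im x ^ 2"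
    using gamma_upper by (intro mult_right_mono) auto
  ultimately have "conj_im x ^ 2 \<le> (4706/1000)^2"
    using gamma_upper by (simp add: power2_eq_square; linarith)
  then have "\<bar>conj_im x\<bar>^2 \<le> (4706/1000)^2" by simp
  then show "\<bar>conj_im x\<bar> \<le> 4706/1000" by (rule power2_le_imp_le) simp
qed

lemma abs_mult_le_bound:
  fixes u v :: real
  assumes "\<bar>u\<bar> \<le> m" "0 \<le> v" "v \<le> w"
  shows "\<bar>u * v\<bar> \<le> m * w"
proof -
  have "\<bar>u * v\<bar> = \<bar>u\<bar> * v" using assms(2) by (simp add: abs_mult)
  also have "\<dots> \<le> m * w" using assms by (intro mult_mono) auto
  finally show ?thesis .
qed

lemma coeff_bounds:
  assumes "1 \<le> emb x" "emb x < \<gamma>" "znorm x \<le> 7"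
  shows "-2 \<le> c2 x \<and> c2 x \<le> 3 \<and> \<bar>c1 x\<bar> \<le> 8 \<and> \<bar>c0 x\<bar> \<le> 17"
proof -
  define A B C where "A = real_of_int (c0 x)" and "B = real_of_int (c1 x)"
    and "C = real_of_int (c2 x)"
  define E P S where "E = emb x" and "P = conj_re x" and "S = conj_im x"
  have P: "\<bar>P\<bar> \<le> 7011/1000" and S: "\<bar>S\<bar> \<le> 4706/1000"
    unfolding P_def S_def using conj_bounds assms(1,3) by auto
  \<comment> \<open>invert the linear map \<open>(A, B, C) \<mapsto> (E, P, S)\<close>\<close>
  have "2*(\<gamma>*E) - P - 3*(S*\<gamma>^2) - C*(4*\<gamma> + 6) = 5*C*(\<gamma>^3 - \<gamma> - 1)"
    unfolding A_def B_def C_def E_def P_def S_def emb_def conj_re_def conj_im_def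
    by (simp add: power2_eq_square power3_eq_cube algebra_simps)
  then have C_eq: "C*(4*\<gamma> + 6) = 2*(\<gamma>*E) - P - 3*(S*\<gamma>^2)"
    using gamma_cube by simp
  have "\<gamma> \<le> \<gamma>*E" "\<gamma>*E \<le> \<gamma>^2"
    using assms(1,2) gamma_lower by (simp_all add: E_def power2_eq_square)
  moreover have "\<bar>S * \<gamma>^2\<bar> \<le> 4706/1000 * (17551/10000)"
    using S gamma_sq_upper by (intro abs_mult_le_bound) auto
  ultimately have C_bounds: "-2915/100 < C*(4*\<gamma> + 6)" "C*(4*\<gamma> + 6) < 3530/100"
    using C_eq P gamma_lower gamma_sq_upper unfolding abs_le_iff by linarith+
  have c_upper: "c2 x \<le> 3"
  proof (rule ccontr)
    assume "\<not> c2 x \<le> 3"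
    then have "4 * (4*\<gamma> + 6) \<le> C * (4*\<gamma> + 6)"
      using gamma_lower by (intro mult_right_mono) (auto simp: C_def)
    moreover have "3530/100 < 4 * (4*\<gamma> + 6)" using gamma_lower by simp
    ultimately show False using C_bounds by linarith
  qed
  have c_lower: "-2 \<le> c2 x"
  proof (rule ccontr)
    assume "\<not> -2 \<le> c2 x"
    then have "C * (4*\<gamma> + 6) \<le> -3 * (4*\<gamma> + 6)"
      using gamma_lower by (intro mult_right_mono) (auto simp: C_def)
    moreover have "-3 * (4*\<gamma> + 6) < -2915/100" using gamma_lower by simp
    ultimately show False using C_bounds by linarith
  qed
  have "\<bar>C\<bar> \<le> 3" using c_lower c_upper by (simp add: C_def abs_le_iff)
  then have "\<bar>C * \<gamma>\<bar> \<le> 3 * (13248/10000)" "\<bar>C * \<gamma>^2\<bar> \<le> 3 * (17551/10000)"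
    using gamma_lower gamma_upper gamma_sq_upper by (intro abs_mult_le_bound; simp)+
  moreover have "B = S + C * \<gamma>"
    unfolding B_def C_def S_def conj_im_def by simp
  ultimately have "\<bar>B\<bar> < 9" using S by linarith
  then have b: "\<bar>c1 x\<bar> \<le> 8" by (simp add: B_def)
  then have "\<bar>B\<bar> \<le> 8" by (simp add: B_def)
  then have "\<bar>B * \<gamma>\<bar> \<le> 8 * (13248/10000)"
    using gamma_lower gamma_upper by (intro abs_mult_le_bound) auto
  moreover have "A = E - B * \<gamma> - C * \<gamma>^2"
    unfolding A_def B_def C_def E_def emb_def by simp
  ultimately have "\<bar>A\<bar> < 18"
    using \<open>\<bar>C * \<gamma>^2\<bar> \<le> 3 * (17551/10000)\<close> assms(1,2) gamma_upper E_def by linarith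
  then have "\<bar>c0 x\<bar> \<le> 17" by (simp add: A_def)
  with b c_lower c_upper show ?thesis by simp
qed

lemma mult_between_endpoint_products:
  fixes b x lo hi :: "'a::linordered_ring"
  assumes "lo \<le> x" "x \<le> hi"
  shows "min (b * lo) (b * hi) \<le> b * x \<and> b * x \<le> max (b * lo) (b * hi)"
proof (cases "0 \<le> b")
  case True
  then have "b * lo \<le> b * x" "b * x \<le> b * hi" using assms by (simp_all add: mult_left_mono)
  then show ?thesis by (simp add: min.coboundedI1 max.coboundedI2)
next
  case False
  then have "b * x \<le> b * lo" "b * hi \<le> b * x" using assms by (simp_all add: mult_left_mono_neg)
  then show ?thesis by (simp add: min.coboundedI2 max.coboundedI1)
qed

text \<open>The condition \<open>1 \<le> emb (ZG a b c) < \<gamma>\<close>, relaxed through the enclosures of \<open>\<gamma>\<close>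
  and \<open>\<gamma>\<^sup>2\<close> and scaled by \<open>10\<^sup>5\<close>, so that it can be evaluated.\<close>
definition window :: "int \<Rightarrow> int \<Rightarrow> int \<Rightarrow> bool" where
  "window a b c \<longleftrightarrow>
     100000 \<le> 100000*a + max (132470*b) (132480*b) + max (175483*c) (175510*c) \<and>
     100000*a + min (132470*b) (132480*b) + min (175483*c) (175510*c) < 132480"

lemma window_if_in_fundamental_domain:
  assumes "1 \<le> emb (ZG a b c)" "emb (ZG a b c) < \<gamma>"
  shows "window a b c"
proof -
  note b_gamma = mult_between_endpoint_products[OF gamma_lower gamma_upper, of "real_of_int b"]
  note c_gamma_sq =
    mult_between_endpoint_products[OF gamma_sq_lower gamma_sq_upper, of "real_of_int c"]
  have "real_of_int 100000
      \<le> real_of_int (100000*a + max (132470*b) (132480*b) + max (175483*c) (175510*c))"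
    "real_of_int (100000*a + min (132470*b) (132480*b) + min (175483*c) (175510*c))
      < real_of_int 132480"
    using assms gamma_upper b_gamma c_gamma_sq unfolding emb_ZG of_int_add of_int_mult of_int_max of_int_min
    by (simp_all add: min_def max_def split: if_splits; linarith)+
  then show ?thesis unfolding window_def of_int_le_iff of_int_less_iff by simp
qed

lemma window_search:
  "\<forall>a\<in>{-17..17}. \<forall>b\<in>{-8..8}. \<forall>c\<in>{-2..3}. window a b c \<and> znorm (ZG a b c) \<in> {1, 5, 7} \<longrightarrow>
     ZG a b c \<in> {ZG 1 0 0, ZG 0 1 0, ZG (-1) (-1) 2, ZG (-2) 1 1}"
  unfolding set_upto[symmetric] by code_simp

lemma fundamental_domain_small_norm:
  assumes "1 \<le> emb x" "emb x < \<gamma>" "znorm x \<in> {1, 5, 7}"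
  shows "x \<in> {ZG 1 0 0, ZG (-1) (-1) 2, ZG (-2) 1 1}"
proof -
  obtain a b c where x: "x = ZG a b c" by (cases x)
  have "a \<in> {-17..17}" "b \<in> {-8..8}" "c \<in> {-2..3}"
    using coeff_bounds[of x] assms by (auto simp: x)
  moreover have "window a b c"
    using window_if_in_fundamental_domain assms by (simp add: x)
  ultimately have "x \<in> {ZG 1 0 0, ZG 0 1 0, ZG (-1) (-1) 2, ZG (-2) 1 1}"
    using window_search assms(3) by (simp add: x)
  \<comment> \<open>\<open>\<gamma>\<close> itself passes the relaxed test; it sits on the boundary \<open>emb = \<gamma>\<close>\<close>
  moreover have "emb (ZG 0 1 0) = \<gamma>" by (simp add: emb_ZG)
  ultimately show ?thesis using assms(2) by auto
qed

lemma exists_gam_pow_into_fundamental_domain: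
  assumes "emb x > 0"
  obtains k where "1 \<le> emb (gam_pow k * x)" "emb (gam_pow k * x) < \<gamma>"
proof
  have g1: "\<gamma> > 1" using gamma_lower by simp
  define l where "l = log \<gamma> (emb x)"
  have "emb x = \<gamma> powr l" using assms g1 by (simp add: l_def)
  then have emb_eq: "emb (gam_pow (- \<lfloor>l\<rfloor>) * x) = \<gamma> powr (l - \<lfloor>l\<rfloor>)"
    by (simp add: emb_mult emb_gam_pow powr_add[symmetric])
  have "0 \<le> l - \<lfloor>l\<rfloor>" "l - \<lfloor>l\<rfloor> < 1"
    using floor_correct[of l] by linarith+
  then show "1 \<le> emb (gam_pow (- \<lfloor>l\<rfloor>) * x)" "emb (gam_pow (- \<lfloor>l\<rfloor>) * x) < \<gamma>"
    unfolding emb_eq using g1 powr_less_mono[of "l - \<lfloor>l\<rfloor>" 1 \<gamma>]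
    by (simp_all add: ge_one_powr_ge_zero)
qed

lemma small_norm_associate:
  assumes "znorm x \<in> {1, -1, 5, -5, 7, -7}"
  obtains k \<rho> where "\<rho> \<in> {ZG 1 0 0, ZG (-1) (-1) 2, ZG (-2) 1 1}"
    and "x = gam_pow k * \<rho> \<or> x = - (gam_pow k * \<rho>)"
proof -
  define x' where "x' = (if emb x > 0 then x else - x)"
  have "emb x \<noteq> 0" using assms by (intro emb_nonzero_if_znorm_nonzero) auto
  then have "emb x' > 0" by (simp add: x'_def emb_uminus)
  then obtain k where k: "1 \<le> emb (gam_pow k * x')" "emb (gam_pow k * x') < \<gamma>"
    by (rule exists_gam_pow_into_fundamental_domain)
  have "znorm (gam_pow k * x') \<ge> 0"
    using k by (intro znorm_nonneg_if_emb_pos) simp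
  moreover have "znorm (gam_pow k * x') \<in> {1, -1, 5, -5, 7, -7}"
    using assms by (auto simp: x'_def znorm_uminus znorm_gam_pow_mult)
  ultimately have \<rho>: "gam_pow k * x' \<in> {ZG 1 0 0, ZG (-1) (-1) 2, ZG (-2) 1 1}"
    using k by (intro fundamental_domain_small_norm) auto
  have "gam_pow (- k) * gam_pow k = 1"
    using gam_pow_add[of "- k" k] by (simp add: gam_pow_def)
  then have "x' = gam_pow (- k) * (gam_pow k * x')"
    by (simp add: mult.assoc[symmetric])
  moreover have "x = x' \<or> x = - x'" by (simp add: x'_def)
  ultimately show ?thesis using that[OF \<rho>] by metis
qed

text \<open>For \<open>p = 2, r = 1\<close> the square term \<open>4Y\<^sup>2\<close> violates this, hence \<open>3 \<le> p\<close>.\<close>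
lemma one_plus_prime_power_mult_pow_prime:
  fixes Y :: "'a::comm_ring_1"
  assumes p: "prime p" "3 \<le> p" and r: "1 \<le> r"
  shows "\<exists>W. (1 + of_nat (p^r) * Y)^p = 1 + of_nat (p^(r+1)) * Y + of_nat (p^(r+2)) * W"
proof -
  define X where "X = of_nat (p^r) * Y"
  define D :: 'a where "D = of_nat (p^(r+2))"
  have of_nat_dvd: "m dvd n \<Longrightarrow> (of_nat m :: 'a) dvd of_nat n" for m n
    by (metis dvd_def of_nat_mult)
  have X_pow: "X^k = of_nat (p^(r*k)) * Y^k" for k
    by (simp add: X_def power_mult_distrib power_mult of_nat_power)
  have "{..p} = insert 0 (insert 1 {2..p})" using p by auto
  then have "(X + 1)^p = 1 + of_nat p * X + (\<Sum>k\<in>{2..p}. of_nat (p choose k) * X^k)"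
    by (simp add: binomial_ring add.assoc)
  moreover have "D dvd of_nat (p choose k) * X^k" if k: "k \<in> {2..p}" for k
  proof (cases "k < p")
    case True
    have "p dvd (p choose k)" using True k p by (intro dvd_choose_prime) auto
    then obtain m where m: "p choose k = p * m" by blast
    have "r * 2 \<le> r * k" using k by (intro mult_le_mono2) simp
    then have "r + 2 \<le> r * k + 1" using r by linarith
    then have "D dvd of_nat (p^(r*k+1))" unfolding D_def by (intro of_nat_dvd le_imp_power_dvd)
    moreover have "of_nat (p choose k) * X^k = of_nat (p^(r*k+1)) * (of_nat m * Y^k)"
      by (simp add: m X_pow power_add algebra_simps)
    ultimately show ?thesis by simp
  next
    case False
    with k have "k = p" by simp
    have "r * 3 \<le> r * p" using p by (intro mult_le_mono2) simp
    then have "r + 2 \<le> r * p" using r by linarith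
    then have "D dvd of_nat (p^(r*p))" unfolding D_def by (intro of_nat_dvd le_imp_power_dvd)
    then show ?thesis by (simp add: \<open>k = p\<close> X_pow)
  qed
  then have "D dvd (\<Sum>k\<in>{2..p}. of_nat (p choose k) * X^k)" by (rule dvd_sum)
  moreover have "of_nat p * X = of_nat (p^(r+1)) * Y" by (simp add: X_def)
  ultimately show ?thesis unfolding D_def by (auto simp: X_def add.commute elim!: dvdE)
qed

lemma one_plus_mult_pow_cong:
  fixes q d m Y :: "'a::comm_ring_1"
  assumes "q = d * m"
  shows "\<exists>W. (1 + q * Y)^u = 1 + of_nat u * q * Y + q * d * W"
proof (induct u)
  case 0
  show ?case by (rule exI[of _ 0]) simp
next
  case (Suc u)
  then obtain W where W: "(1 + q * Y)^u = 1 + of_nat u * q * Y + q * d * W" by blast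
  have "(1 + q * Y)^Suc u = (1 + of_nat u * q * Y + q * d * W) * (1 + q * Y)"
    by (simp only: power_Suc2 W)
  also have "\<dots> = 1 + of_nat (Suc u) * q * Y + q * d * (W + of_nat u * m * Y^2 + q * W * Y)"
    by (simp add: assms algebra_simps power2_eq_square)
  finally show ?case by blast
qed

lemma one_plus_prime_mult_pow_prime_power:
  fixes \<beta> :: "'a::comm_ring_1"
  assumes p: "prime p" "3 \<le> p"
  shows "\<exists>W. (1 + of_nat p * \<beta>)^(p^s) = 1 + of_nat (p^(s+1)) * (\<beta> + of_nat p * W)"
proof (induct s)
  case 0
  show ?case by (rule exI[of _ 0]) simp
next
  case (Suc s)
  then obtain W where W: "(1 + of_nat p * \<beta>)^(p^s) = 1 + of_nat (p^(s+1)) * (\<beta> + of_nat p * W)"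
    by blast
  obtain W' where W': "(1 + of_nat (p^(s+1)) * (\<beta> + of_nat p * W))^p
      = 1 + of_nat (p^(s+1+1)) * (\<beta> + of_nat p * W) + of_nat (p^(s+1+2)) * W'"
    using one_plus_prime_power_mult_pow_prime[OF p le_add2] by blast
  have "(1 + of_nat p * \<beta>)^(p^Suc s) = ((1 + of_nat p * \<beta>)^(p^s))^p"
    by (simp add: power_mult[symmetric] mult.commute)
  also have "\<dots> = 1 + of_nat (p^(Suc s + 1)) * (\<beta> + of_nat p * (W + W'))"
    unfolding W W' by (simp add: power_add algebra_simps)
  finally show ?case by blast
qed

lemma one_plus_prime_mult_pow:
  fixes \<beta> :: "'a::comm_ring_1"
  assumes "prime p" "3 \<le> p"
  shows "\<exists>W. (1 + of_nat p * \<beta>)^(p^s * u)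
    = 1 + of_nat (p^(s+1)) * (of_nat u * \<beta> + of_nat p * W)"
proof -
  obtain W where W: "(1 + of_nat p * \<beta>)^(p^s) = 1 + of_nat (p^(s+1)) * (\<beta> + of_nat p * W)"
    using one_plus_prime_mult_pow_prime_power[OF assms] by blast
  define q :: 'a where "q = of_nat (p^(s+1))"
  obtain W' where W': "(1 + q * (\<beta> + of_nat p * W))^u
      = 1 + of_nat u * q * (\<beta> + of_nat p * W) + q * of_nat p * W'"
    using one_plus_mult_pow_cong[of q "of_nat p" "of_nat (p^s)"] by (auto simp: q_def)
  have "(1 + of_nat p * \<beta>)^(p^s * u) = 1 + q * (of_nat u * \<beta> + of_nat p * (of_nat u * W + W'))"
    unfolding power_mult W q_def[symmetric] W' by (simp add: algebra_simps)
  then show ?thesis unfolding q_def by blast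
qed

text \<open>Skolem's argument: \<open>(1 + p\<beta>)\<^sup>n \<equiv> 1 + np\<beta>\<close> modulo \<open>p\<^bsup>v\<^sub>p(n)+2\<^esup>\<close>, so the
  \<open>\<gamma>\<close>-coordinate is \<open>np c1(w\<beta>)\<close> modulo \<open>p\<^bsup>v\<^sub>p(n)+2\<^esup>\<close>, which does not vanish.\<close>
lemma coeff1_skolem:
  assumes p: "prime p" "3 \<le> p" and w: "c1 w = 0" "\<not> int p dvd c1 (w * \<beta>)" and "n > 0"
  shows "c1 (w * (1 + of_nat p * \<beta>)^n) \<noteq> 0"
proof
  assume zero: "c1 (w * (1 + of_nat p * \<beta>)^n) = 0"
  define s where "s = multiplicity p n"
  obtain u where n: "n = p^s * u" and u: "\<not> p dvd u"
    using multiplicity_decompose'[of n p] \<open>n > 0\<close> p by (auto simp: s_def)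
  obtain W where "(1 + of_nat p * \<beta>)^n = 1 + of_nat (p^(s+1)) * (of_nat u * \<beta> + of_nat p * W)"
    using one_plus_prime_mult_pow[OF p] n by blast
  then have "w * (1 + of_nat p * \<beta>)^n
      = w + of_nat (p^(s+1) * u) * (w * \<beta>) + of_nat (p^(s+1) * p) * (w * W)"
    by (simp add: algebra_simps)
  then have "c1 (w * (1 + of_nat p * \<beta>)^n)
      = int (p^(s+1) * u) * c1 (w * \<beta>) + int (p^(s+1) * p) * c1 (w * W)"
    by (simp only: c1_add c1_of_nat_mult w add_0)
  with zero have "int (p^(s+1)) * (int u * c1 (w * \<beta>) + int p * c1 (w * W)) = 0"
    by (simp add: algebra_simps)
  then have "int u * c1 (w * \<beta>) = - (int p * c1 (w * W))"
    using p by (simp add: prime_gt_0_nat add_eq_0_iff)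
  then have "int p dvd int u * c1 (w * \<beta>)" by (metis dvd_minus_iff dvd_triv_left)
  moreover have "prime (int p)" using p by simp
  ultimately show False using u w by (auto simp: prime_dvd_mult_iff)
qed

text \<open>\<open>x\<^sup>3 - x - 1\<close> has the three roots 4, 13, 42 modulo 59, so \<open>\<gamma>\<^sup>5\<^sup>8 \<equiv> 1 (mod 59)\<close>.\<close>
definition gam58_quot :: zgamma where "gam58_quot = ZG 36333 63760 48131"

definition gam_inv58_quot :: zgamma where "gam_inv58_quot = ZG (-48) 19 13"

lemma gam_pow_58: "gam ^ 58 = 1 + of_nat 59 * gam58_quot"
  and gam_inv_pow_58: "gam_inv ^ 58 = 1 + of_nat 59 * gam_inv58_quot"
  by code_simp+

lemma gam_pow_58_mult_eq:
  "gam_pow (58 * t) = (1 + of_nat 59 * gam58_quot) ^ nat t * (1 + of_nat 59 * gam_inv58_quot) ^ nat (- t)"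
proof -
  have "nat (58 * t) = 58 * nat t" "nat (- (58 * t)) = 58 * nat (- t)"
    by (cases "t \<ge> 0"; simp)+
  then show ?thesis by (simp add: gam_pow_def power_mult gam_pow_58 gam_inv_pow_58)
qed

lemma gam_pow_58_mult: "\<exists>W. gam_pow (58 * t) = 1 + of_nat 59 * W"
proof -
  have cong: "\<exists>W. (1 + of_nat 59 * Y)^u = 1 + of_nat 59 * (W :: zgamma)" for Y u
  proof -
    obtain W where "(1 + of_nat 59 * Y)^u = 1 + of_nat u * of_nat 59 * Y + of_nat 59 * 1 * W"
      using one_plus_mult_pow_cong[of "of_nat 59" 1 "of_nat 59" Y u] by auto
    then have "(1 + of_nat 59 * Y)^u = 1 + of_nat 59 * (of_nat u * Y + W)"
      by (simp add: algebra_simps)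
    then show ?thesis by blast
  qed
  obtain W1 W2 where W1: "(1 + of_nat 59 * gam58_quot) ^ nat t = 1 + of_nat 59 * W1"
      and W2: "(1 + of_nat 59 * gam_inv58_quot) ^ nat (- t) = 1 + of_nat 59 * W2"
    using cong by blast
  have "gam_pow (58 * t) = 1 + of_nat 59 * (W1 + W2 + of_nat 59 * W1 * W2)"
    unfolding gam_pow_58_mult_eq W1 W2 by (simp add: algebra_simps)
  then show ?thesis by blast
qed

lemma coeff1_zero_mod_59:
  assumes "c1 (gam_pow k * \<rho>) = 0"
  shows "59 dvd c1 (gam ^ nat (k mod 58) * \<rho>)"
proof -
  obtain W where W: "gam_pow (58 * (k div 58)) = 1 + of_nat 59 * W"
    using gam_pow_58_mult by blast
  have "gam_pow k = gam_pow (k mod 58) * gam_pow (58 * (k div 58))"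
    by (simp flip: gam_pow_add)
  also have "gam_pow (k mod 58) = gam ^ nat (k mod 58)"
    using gam_pow_of_nat[of "nat (k mod 58)"] by simp
  finally have "gam_pow k * \<rho> = gam ^ nat (k mod 58) * \<rho> + of_nat 59 * (gam ^ nat (k mod 58) * \<rho> * W)"
    by (simp add: W algebra_simps)
  then have "c1 (gam_pow k * \<rho>) = c1 (gam ^ nat (k mod 58) * \<rho>) + 59 * c1 (gam ^ nat (k mod 58) * \<rho> * W)"
    by (simp only: c1_add c1_of_nat_mult)
  with assms show ?thesis by (metis add_eq_0_iff dvd_minus_iff dvd_triv_left)
qed

lemma coeff1_zero_unique_in_class:
  assumes z: "c1 (gam_pow z * \<rho>) = 0" "\<not> 59 dvd c1 (gam_pow z * \<rho> * gam58_quot)"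
      "\<not> 59 dvd c1 (gam_pow z * \<rho> * gam_inv58_quot)"
    and k: "k mod 58 = z mod 58" "c1 (gam_pow k * \<rho>) = 0"
  shows "k = z"
proof (rule ccontr)
  assume "k \<noteq> z"
  define t where "t = (k - z) div 58"
  have "58 dvd k - z" using k(1) by (simp add: mod_eq_dvd_iff)
  then have "k = z + 58 * t" by (simp add: t_def)
  then have k_eq: "gam_pow k * \<rho> = gam_pow z * \<rho> * gam_pow (58 * t)"
    by (simp add: gam_pow_add algebra_simps)
  have prime59: "prime (59::nat)" by code_simp
  show False
  proof (cases "t > 0")
    case True
    then have "c1 (gam_pow z * \<rho> * (1 + of_nat 59 * gam58_quot) ^ nat t) \<noteq> 0"
      using z by (intro coeff1_skolem[OF prime59]) auto
    then show False using k(2) True by (simp add: k_eq gam_pow_58_mult_eq)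
  next
    case False
    with \<open>k \<noteq> z\<close> \<open>k = z + 58 * t\<close> have "t < 0" by simp
    then have "c1 (gam_pow z * \<rho> * (1 + of_nat 59 * gam_inv58_quot) ^ nat (- t)) \<noteq> 0"
      using z by (intro coeff1_skolem[OF prime59]) auto
    then show False using k(2) \<open>t < 0\<close> by (simp add: k_eq gam_pow_58_mult_eq)
  qed
qed

lemma coeff1_zeros_subset:
  assumes "\<forall>r\<in>{..<58}. 59 dvd c1 (gam ^ r * \<rho>) \<longrightarrow>
      (\<exists>z\<in>Z. z mod 58 = int r \<and> c1 (gam_pow z * \<rho>) = 0
         \<and> \<not> 59 dvd c1 (gam_pow z * \<rho> * gam58_quot)
         \<and> \<not> 59 dvd c1 (gam_pow z * \<rho> * gam_inv58_quot))"
    and "c1 (gam_pow k * \<rho>) = 0"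
  shows "k \<in> Z"
proof -
  have "nat (k mod 58) \<in> {..<58}" by (simp add: nat_less_iff)
  with assms coeff1_zero_mod_59 obtain z where "z \<in> Z" "z mod 58 = k mod 58"
      "c1 (gam_pow z * \<rho>) = 0" "\<not> 59 dvd c1 (gam_pow z * \<rho> * gam58_quot)"
      "\<not> 59 dvd c1 (gam_pow z * \<rho> * gam_inv58_quot)"
    by fastforce
  with coeff1_zero_unique_in_class[of z \<rho> k] assms(2) show ?thesis by simp
qed

lemma coeff1_zeros:
  assumes "\<rho> \<in> {ZG 1 0 0, ZG (-1) (-1) 2, ZG (-2) 1 1}" and zero: "c1 (gam_pow k * \<rho>) = 0"
  shows "gam_pow k * \<rho> \<in> {ZG 1 0 0, ZG 0 0 1, ZG (-1) 0 1, ZG 2 0 (-1), ZG (-7) 0 4,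
    ZG 1 0 1, ZG (-3) 0 2, ZG (-1) 0 2, ZG (-5) 0 3}" (is "_ \<in> ?S")
  using assms(1)
proof (elim insertE emptyE)
  assume \<rho>: "\<rho> = ZG 1 0 0"
  have "k \<in> {0, 2, -1, -5, -14}"
    using zero by (intro coeff1_zeros_subset[of \<rho>]) (simp_all add: \<rho>, code_simp)
  moreover have "\<forall>k\<in>{0, 2, -1, -5, -14}. gam_pow k * \<rho> \<in> ?S" unfolding \<rho> by code_simp
  ultimately show ?thesis by blast
next
  assume \<rho>: "\<rho> = ZG (-1) (-1) 2"
  have "k \<in> {3, -3}"
    using zero by (intro coeff1_zeros_subset[of \<rho>]) (simp_all add: \<rho>, code_simp)
  moreover have "\<forall>k\<in>{3, -3}. gam_pow k * \<rho> \<in> ?S" unfolding \<rho> by code_simp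
  ultimately show ?thesis by blast
next
  assume \<rho>: "\<rho> = ZG (-2) 1 1"
  have "k \<in> {3, -5}"
    using zero by (intro coeff1_zeros_subset[of \<rho>]) (simp_all add: \<rho>, code_simp)
  moreover have "\<forall>k\<in>{3, -5}. gam_pow k * \<rho> \<in> ?S" unfolding \<rho> by code_simp
  ultimately show ?thesis by blast
qed

lemma normK_small_solutions:
  assumes "normK m n \<in> {1, -1, 5, -5, 7, -7}"
  shows "(m, n) \<in> {(1, 0), (-1, 0), (0, 1), (0, -1), (-1, 1), (1, -1), (2, -1), (-2, 1), (-7, 4),
    (7, -4), (1, 1), (-1, -1), (-3, 2), (3, -2), (-1, 2), (1, -2), (-5, 3), (5, -3)}"
proof -
  have "znorm (ZG m 0 n) \<in> {1, -1, 5, -5, 7, -7}"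
    using assms by (simp add: znorm_eq_normK)
  then obtain k \<rho> where \<rho>: "\<rho> \<in> {ZG 1 0 0, ZG (-1) (-1) 2, ZG (-2) 1 1}"
    and x: "ZG m 0 n = gam_pow k * \<rho> \<or> ZG m 0 n = - (gam_pow k * \<rho>)"
    by (rule small_norm_associate)
  define y where "y = gam_pow k * \<rho>"
  have xy: "ZG m 0 n = y \<or> ZG m 0 n = - y" using x by (simp add: y_def)
  then have "c1 y = 0" by (auto simp: c1_uminus dest: arg_cong[where f = c1])
  with \<rho> have "y \<in> {ZG 1 0 0, ZG 0 0 1, ZG (-1) 0 1, ZG 2 0 (-1), ZG (-7) 0 4,
      ZG 1 0 1, ZG (-3) 0 2, ZG (-1) 0 2, ZG (-5) 0 3}"
    unfolding y_def by (rule coeff1_zeros)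
  with xy show ?thesis by (elim insertE emptyE disjE) auto
qed

theorem lemma1:
  shows "({(m::int, n::int). normK m n = 1 \<or> normK m n = -1} =
           {(1, 0), (-1, 0), (0, 1), (0, -1), (-1, 1), (1, -1), (2, -1), (-2, 1), (-7, 4), (7, -4)})
       \<and> ({(m::int, n::int). normK m n = 5 \<or> normK m n = -5} =
           {(1, 1), (-1, -1), (-3, 2), (3, -2)})
       \<and> ({(m::int, n::int). normK m n = 7 \<or> normK m n = -7} =
           {(-1, 2), (1, -2), (-5, 3), (5, -3)})"
proof -
  let ?S = "{(1, 0), (-1, 0), (0, 1), (0, -1), (-1, 1), (1, -1), (2, -1), (-2, 1), (-7, 4),
    (7, -4), (1, 1), (-1, -1), (-3, 2), (3, -2), (-1, 2), (1, -2), (-5, 3), (5, -3)} :: (int \<times> int) set"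
  have restrict: "{(m, n). normK m n = a \<or> normK m n = - a}
      = ?S \<inter> {(m, n). normK m n = a \<or> normK m n = - a}" if "a \<in> {1, 5, 7}" for a
  proof (rule Int_absorb1[symmetric], rule subsetI)
    fix p assume "p \<in> {(m, n). normK m n = a \<or> normK m n = - a}"
    then obtain m n where p: "p = (m, n)" and "normK m n = a \<or> normK m n = - a"
      by blast
    then have "normK m n \<in> {1, -1, 5, -5, 7, -7}" using that by auto
    then show "p \<in> ?S" unfolding p by (rule normK_small_solutions)
  qed
  show ?thesis
    by (subst (1 2 3) restrict) (simp_all add: normK_def)
qed

end
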